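(* Let $p:[0,\infty)\to[0,1]$ be log-convex, strictly decreasing, and twice continuously differentiable on $[0,\infty)$, and for $\alpha\in(0,1]$ let $h(x)=(-\log p(x))^{\alpha}$. If $\alpha\in(0,1)$, then $h$ is strictly concave on $[0,\infty)$. Moreover, $h$ is concave on $[0,\infty)$ for every $\alpha\in(0,1]$.
   Context: Here $p$ is the attack success probability on an edge of an attack graph as a function of the security investment $x$ on that edge, and $\alpha$ is the parameter of the Prelec probability weighting function $w(p)=\exp[-(-\log p)^{\alpha}]$. *)

theory Defs
  imports "HOL-Analysis.Analysis"
begin

definition strictly_concave_on :: "real set \<Rightarrow> (real \<Rightarrow> real) \<Rightarrow> bool" where
  "strictly_concave_on S f \<longleftrightarrow> convex S \<and>
    (\<forall>x\<in>S. \<forall>y\<in>S. x \<noteq> y \<longrightarrow> (\<forall>u. 0 < u \<and> u < 1 \<longrightarrow>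
       u * f x + (1 - u) * f y < f (u * x + (1 - u) * y)))"

end

theory Submission
  imports Defs
begin

text \<open>Since \<open>p\<close> is log-convex and strictly decreasing with values in \<open>(0, 1]\<close>, the function
  \<open>g = - ln \<circ> p\<close> is concave, nonnegative and strictly increasing. The map \<open>t \<mapsto> t powr \<alpha>\<close> is
  nondecreasing and concave on \<open>[0, \<infinity>)\<close>, strictly concave for \<open>\<alpha> < 1\<close>; a concave nondecreasing
  function of a concave function is concave, and strictly concave if the outer function is
  strictly concave and the inner one injective.\<close>

lemma strictly_concave_onD:
  assumes "strictly_concave_on S f" "x \<in> S" "y \<in> S" "x \<noteq> y" "0 < u" "u < 1"
  shows "u * f x + (1 - u) * f y < f (u * x + (1 - u) * y)"
  using assms unfolding strictly_concave_on_def by blast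

lemma strictly_concave_on_imp_concave_on:
  assumes "strictly_concave_on S f"
  shows "concave_on S f"
proof (rule concave_on_linorderI)
  show "convex S"
    using assms by (simp add: strictly_concave_on_def)
  fix t x y :: real
  assume "0 < t" "t < 1" "x \<in> S" "y \<in> S" "x < y"
  then have "(1 - t) * f x + (1 - (1 - t)) * f y < f ((1 - t) * x + (1 - (1 - t)) * y)"
    by (intro strictly_concave_onD[OF assms]) auto
  then show "(1 - t) * f x + t * f y \<le> f ((1 - t) *\<^sub>R x + t *\<^sub>R y)"
    by simp
qed

lemma concave_on_compose_mono:
  fixes g :: "'a::real_vector \<Rightarrow> real"
  assumes f: "concave_on T f" "mono_on T f"
    and g: "concave_on S g" "g ` S \<subseteq> T"
  shows "concave_on S (\<lambda>x. f (g x))"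
  unfolding concave_on_iff
proof (intro conjI ballI allI impI)
  show "convex S"
    using g(1) by (rule concave_on_imp_convex)
  fix x y and u v :: real
  assume xy: "x \<in> S" "y \<in> S" and uv: "0 \<le> u" "0 \<le> v" "u + v = 1"
  have gxy: "g x \<in> T" "g y \<in> T" "g (u *\<^sub>R x + v *\<^sub>R y) \<in> T"
    using g(2) xy uv \<open>convex S\<close> by (auto dest: convexD)
  have mean: "u *\<^sub>R g x + v *\<^sub>R g y \<in> T"
    using convexD[OF concave_on_imp_convex[OF f(1)] gxy(1,2) uv] .
  have u_eq: "u = 1 - v"
    using uv(3) by simp
  have g_mean: "u *\<^sub>R g x + v *\<^sub>R g y \<le> g (u *\<^sub>R x + v *\<^sub>R y)"
    using concave_onD[OF g(1), of v x y] xy uv unfolding u_eq by simp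
  have "u * f (g x) + v * f (g y) \<le> f (u *\<^sub>R g x + v *\<^sub>R g y)"
    using concave_onD[OF f(1), of v "g x" "g y"] gxy uv unfolding u_eq by simp
  also have "\<dots> \<le> f (g (u *\<^sub>R x + v *\<^sub>R y))"
    using mono_onD[OF f(2) mean gxy(3) g_mean] .
  finally show "u * f (g x) + v * f (g y) \<le> f (g (u *\<^sub>R x + v *\<^sub>R y))" .
qed

lemma strictly_concave_on_compose_mono:
  assumes f: "strictly_concave_on T f" "mono_on T f"
    and g: "concave_on S g" "inj_on g S" "g ` S \<subseteq> T"
  shows "strictly_concave_on S (\<lambda>x. f (g x))"
  unfolding strictly_concave_on_def
proof (intro conjI ballI allI impI)
  show "convex S"
    using g(1) by (rule concave_on_imp_convex)
  fix x y u :: real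
  assume xy: "x \<in> S" "y \<in> S" "x \<noteq> y" and u: "0 < u \<and> u < 1"
  have gxy: "g x \<in> T" "g y \<in> T" "g (u * x + (1 - u) * y) \<in> T"
    using g(3) xy u convexD[OF \<open>convex S\<close>, of x y u "1 - u"] by auto
  moreover have "convex T"
    using f(1) by (simp add: strictly_concave_on_def)
  ultimately have mean: "u * g x + (1 - u) * g y \<in> T"
    using u convexD[of T "g x" "g y" u "1 - u"] by simp
  have "g x \<noteq> g y"
    using g(2) xy by (auto dest: inj_onD)
  then have "u * f (g x) + (1 - u) * f (g y) < f (u * g x + (1 - u) * g y)"
    using strictly_concave_onD[OF f(1) gxy(1,2)] u by blast
  also have "\<dots> \<le> f (g (u * x + (1 - u) * y))"
    using concave_onD[OF g(1), of "1 - u" x y] xy u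
    by (intro mono_onD[OF f(2) mean gxy(3)]) simp
  finally show "u * f (g x) + (1 - u) * f (g y) < f (g (u * x + (1 - u) * y))" .
qed

lemma powr_less_tangent_line:
  fixes t a :: real
  assumes "0 \<le> t" "t \<noteq> 1" "0 < a" "a < 1"
  shows "t powr a < 1 + a * (t - 1)"
proof -
  define f where "f s = s powr a - a * s" for s :: real
  have der: "DERIV f s :> a * s powr (a - 1) - a" if "s > 0" for s
    unfolding f_def using that by (auto intro!: derivative_eq_intros)
  consider "t = 0" | "0 < t" "t < 1" | "1 < t"
    using assms by linarith
  then show ?thesis
  proof cases
    case 1
    then show ?thesis using assms by simp
  next
    case 2
    obtain z where z: "t < z" "z < 1" "f 1 - f t = (1 - t) * (a * z powr (a - 1) - a)"
      using MVT2[of t 1 f "\<lambda>s. a * s powr (a - 1) - a"] 2 der by force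
    have "1 < z powr (a - 1)"
      using powr_less_mono2_neg[of "a - 1" z 1] z 2 assms by simp
    then have "0 < (1 - t) * (a * z powr (a - 1) - a)"
      using 2 assms by simp
    then have "f t < f 1"
      using z(3) by linarith
    then show ?thesis
      by (simp add: f_def algebra_simps)
  next
    case 3
    obtain z where z: "1 < z" "z < t" "f t - f 1 = (t - 1) * (a * z powr (a - 1) - a)"
      using MVT2[of 1 t f "\<lambda>s. a * s powr (a - 1) - a"] 3 der by force
    have "z powr (a - 1) < 1"
      using powr_less_mono2_neg[of "a - 1" 1 z] z assms by simp
    then have "(t - 1) * (a * z powr (a - 1) - a) < 0"
      using 3 assms by (simp add: mult_pos_neg)
    then have "f t < f 1"
      using z(3) by linarith
    then show ?thesis
      by (simp add: f_def algebra_simps)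
  qed
qed

lemma powr_le_tangent_line:
  fixes t a :: real
  assumes "0 \<le> t" "0 < a" "a < 1"
  shows "t powr a \<le> 1 + a * (t - 1)"
  using powr_less_tangent_line[OF assms(1) _ assms(2,3)] by (cases "t = 1") auto

text \<open>Normalise by the mean \<open>m\<close> and compare \<open>t powr \<alpha>\<close> with its tangent line at \<open>t = 1\<close>.\<close>
lemma powr_strictly_concave:
  fixes \<alpha> :: real
  assumes "0 < \<alpha>" "\<alpha> < 1"
  shows "strictly_concave_on {0..} (\<lambda>x. x powr \<alpha>)"
  unfolding strictly_concave_on_def
proof (intro conjI ballI allI impI)
  fix a b u :: real
  assume ab: "a \<in> {0..}" "b \<in> {0..}" "a \<noteq> b" and u: "0 < u \<and> u < 1"
  define m where "m = u * a + (1 - u) * b"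
  have m_pos: "0 < m"
    using ab u unfolding m_def
    by (cases "a = 0") (auto intro: add_pos_nonneg add_nonneg_pos)
  have "a - m = (1 - u) * (a - b)"
    by (simp add: m_def algebra_simps)
  then have "a \<noteq> m"
    using ab u by auto
  then have "(a / m) powr \<alpha> < 1 + \<alpha> * (a / m - 1)"
    using powr_less_tangent_line[of "a / m" \<alpha>] ab m_pos assms by simp
  moreover have "(b / m) powr \<alpha> \<le> 1 + \<alpha> * (b / m - 1)"
    using powr_le_tangent_line[of "b / m" \<alpha>] ab m_pos assms by simp
  ultimately have "u * (a / m) powr \<alpha> + (1 - u) * (b / m) powr \<alpha>
      < u * (1 + \<alpha> * (a / m - 1)) + (1 - u) * (1 + \<alpha> * (b / m - 1))"
    using u by (intro add_less_le_mono mult_left_mono) auto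
  also have "\<dots> = 1 + \<alpha> * ((u * a + (1 - u) * b) / m - 1)"
    using m_pos by (simp add: field_simps)
  also have "\<dots> = 1"
    using m_pos by (simp add: m_def)
  finally have "u * (a / m) powr \<alpha> + (1 - u) * (b / m) powr \<alpha> < 1" .
  then have "(u * a powr \<alpha> + (1 - u) * b powr \<alpha>) / m powr \<alpha> < 1"
    using ab m_pos by (simp add: powr_divide add_divide_distrib)
  then show "u * a powr \<alpha> + (1 - u) * b powr \<alpha> < (u * a + (1 - u) * b) powr \<alpha>"
    using m_pos by (simp add: m_def divide_less_eq)
qed simp

lemma powr_concave:
  fixes \<alpha> :: real
  assumes "0 < \<alpha>" "\<alpha> \<le> 1"
  shows "concave_on {0..} (\<lambda>x. x powr \<alpha>)"
proof (cases "\<alpha> = 1")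
  case True
  then show ?thesis
    by (auto simp: concave_on_iff)
next
  case False
  then show ?thesis
    using assms by (intro strictly_concave_on_imp_concave_on powr_strictly_concave) auto
qed

lemma mono_on_powr:
  fixes \<alpha> :: real
  assumes "0 \<le> \<alpha>"
  shows "mono_on {0..} (\<lambda>x. x powr \<alpha>)"
  using assms by (intro mono_onI powr_mono2) auto

theorem lemma1:
  fixes p p' p'' :: "real \<Rightarrow> real" and \<alpha> :: real
  assumes range: "\<forall>x\<ge>0. 0 \<le> p x \<and> p x \<le> 1"
    and logconvex: "convex_on {0..} (\<lambda>x. ln (p x))"
    and decr: "\<forall>x y. 0 \<le> x \<longrightarrow> x < y \<longrightarrow> p y < p x"
    and d1: "\<forall>x\<ge>0. (p has_real_derivative p' x) (at x within {0..})"
    and d2: "\<forall>x\<ge>0. (p' has_real_derivative p'' x) (at x within {0..})"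
    and c2: "continuous_on {0..} p''"
    and alpha: "0 < \<alpha>" "\<alpha> \<le> 1"
  shows "(\<alpha> < 1 \<longrightarrow> strictly_concave_on {0..} (\<lambda>x. (- ln (p x)) powr \<alpha>))
       \<and> concave_on {0..} (\<lambda>x. (- ln (p x)) powr \<alpha>)"
proof -
  define g where "g x = - ln (p x)" for x
  have p_pos: "0 < p x" if "0 \<le> x" for x
    using decr[rule_format, OF that, of "x + 1"] range[rule_format, of "x + 1"] that by force
  have g_range: "g ` {0..} \<subseteq> {0..}"
    using range p_pos by (auto simp: g_def)
  have g_concave: "concave_on {0..} g"
    using logconvex by (simp add: g_def concave_on_def)
  have "strict_mono_on {0..} g"
    using decr p_pos by (auto simp: g_def strict_mono_on_def)
  then have g_inj: "inj_on g {0..}"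
    by (rule strict_mono_on_imp_inj_on)
  have powr_mono_on: "mono_on {0..} (\<lambda>x. x powr \<alpha>)"
    using alpha by (simp add: mono_on_powr)
  have "concave_on {0..} (\<lambda>x. g x powr \<alpha>)"
    by (rule concave_on_compose_mono[OF powr_concave[OF alpha] powr_mono_on g_concave g_range])
  moreover have "strictly_concave_on {0..} (\<lambda>x. g x powr \<alpha>)" if "\<alpha> < 1"
    by (rule strictly_concave_on_compose_mono[OF powr_strictly_concave[OF alpha(1) that]
          powr_mono_on g_concave g_inj g_range])
  ultimately show ?thesis
    by (simp add: g_def)
qed

end
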